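(* Let $X$ be a non-trivial vector space over a field $\mathbb{k}$ and let $T:X\to X$ be a linear map with no non-trivial finite dimensional invariant subspaces. Then for any finite dimensional subspace $L$ of $X$, there is $m=m(L)\in\mathbb{N}$ such that $p(T)(L)\cap L=\{0\}$ for every polynomial $p\in\mathbb{k}[t]$ with $\deg p\geq m$.
   Context: A non-trivial space/subspace means one different from $\{0\}$; a subspace $L$ is invariant for $T$ if $T(L)\subseteq L$. *)

theory Defs
  imports Main "HOL-Computational_Algebra.Polynomial"
begin

definition poly_op :: "('k::field \<Rightarrow> 'v::ab_group_add \<Rightarrow> 'v) \<Rightarrow> 'k poly \<Rightarrow> ('v \<Rightarrow> 'v) \<Rightarrow> 'v \<Rightarrow> 'v"
  where "poly_op scale p T = (\<lambda>x. \<Sum>i\<le>degree p. scale (coeff p i) ((T ^^ i) x))"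

definition fin_dim_subspace :: "('k::field \<Rightarrow> 'v::ab_group_add \<Rightarrow> 'v) \<Rightarrow> 'v set \<Rightarrow> bool"
  where "fin_dim_subspace scale L \<longleftrightarrow> module.subspace scale L \<and> (\<exists>B. finite B \<and> module.span scale B = L)"

end

theory Submission
  imports Defs
begin

text \<open>
  Consider the Krylov spaces K(0) = L and K(j+1) = L + T K(j), all finite dimensional.
  Since K(j+2) = K(j+1) + T K(j+1), the map T induces surjections K(j+1)/K(j) \<rightarrow> K(j+2)/K(j+1),
  so the increments of dim K(j) are non-increasing, hence constant from some j0 on, and from then
  on these surjections are bijective: T raises the exact level of every vector of level above j0
  by one. If T has no non-trivial finite dimensional invariant subspace, the orbit of x \<noteq> 0 is
  linearly independent, so it leaves K(j0) within m = dim K(j0) steps. For x \<in> L and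
  deg p = d \<ge> m the top term T^d x of p(T) x therefore lies outside a Krylov space containing L
  and all lower terms, so p(T) x \<in> L forces p(T) x = 0.
\<close>

context vector_space
begin

lemma card_le_dim_of_finite_span:
  assumes "finite F" "V \<subseteq> span F" "B \<subseteq> V" "independent B"
  shows "card B \<le> dim V"
proof -
  obtain C where C: "B \<subseteq> C" "C \<subseteq> V" "independent C" "V \<subseteq> span C"
    using maximal_independent_subset_extend assms(3,4) by blast
  then have "finite C" using independent_span_bound[OF assms(1)] assms(2) by blast
  then have "card B \<le> card C" using C(1) by (rule card_mono)
  also have "card C = dim V" using C(2,4,3) by (rule basis_card_eq_dim)
  finally show ?thesis .
qed

lemma finite_basis_of_finite_span:
  assumes "finite F" "V \<subseteq> span F"
  obtains B where "finite B" "B \<subseteq> V" "independent B" "V \<subseteq> span B" "card B = dim V"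
  by (metis assms basis_exists independent_span_bound subset_trans)

lemma funpow_degree_in_subspace:
  assumes W: "subspace W" and p: "p \<noteq> 0"
    and lower: "\<And>i. i < degree p \<Longrightarrow> (T ^^ i) x \<in> W"
    and "poly_op scale p T x \<in> W"
  shows "(T ^^ degree p) x \<in> W"
proof -
  let ?c = "lead_coeff p"
  have lower_sum: "(\<Sum>i<degree p. scale (coeff p i) ((T ^^ i) x)) \<in> W"
    using lower by (intro subspace_sum[OF W] subspace_scale[OF W]) simp
  have "poly_op scale p T x = (\<Sum>i<degree p. scale (coeff p i) ((T ^^ i) x)) + scale ?c ((T ^^ degree p) x)"
    unfolding poly_op_def lessThan_Suc_atMost[symmetric] sum.lessThan_Suc ..
  then have "scale ?c ((T ^^ degree p) x) \<in> W"
    using subspace_diff[OF W \<open>poly_op scale p T x \<in> W\<close> lower_sum] by simp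
  then have "scale (inverse ?c) (scale ?c ((T ^^ degree p) x)) \<in> W"
    by (rule subspace_scale[OF W])
  with p show ?thesis by simp
qed

end

locale linear_endo = vector_space scale
  for scale :: "'k::field \<Rightarrow> 'v::ab_group_add \<Rightarrow> 'v" +
  fixes T :: "'v \<Rightarrow> 'v"
  assumes linear_T: "Vector_Spaces.linear scale scale T"
begin

lemma image_span: "T ` span S = span (T ` S)"
  using module_hom.span_image[OF module_hom_linearI[OF linear_T]] by metis

lemma funpow_at_zero: "(T ^^ i) 0 = 0"
  by (induction i) (simp_all add: module_hom.zero[OF module_hom_linearI[OF linear_T]])

text \<open>Extending S to a basis B of Y, the space Y + T Y is spanned by B together with T (B - S).\<close>
lemma dim_span_Un_image_le:
  assumes F: "finite F" "Y \<subseteq> span F"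
    and S: "independent S" "S \<subseteq> Y" "T ` S \<subseteq> Y"
    and V: "V \<subseteq> span (Y \<union> T ` Y)"
  shows "dim V + card S \<le> 2 * dim Y"
proof -
  obtain B where B: "S \<subseteq> B" "B \<subseteq> Y" "independent B" "Y \<subseteq> span B"
    using maximal_independent_subset_extend S(1,2) by blast
  have "finite B" using independent_span_bound[OF F(1) B(3)] B(2) F(2) by blast
  have card_B: "card B = dim Y" using basis_card_eq_dim B(2-4) by blast
  let ?G = "B \<union> T ` (B - S)"
  have "Y \<subseteq> span ?G" using B(4) span_mono[of B ?G] by blast
  moreover have "T ` Y \<subseteq> span ?G"
  proof -
    have "T ` B \<subseteq> T ` S \<union> T ` (B - S)" by blast
    also have "\<dots> \<subseteq> span ?G" using S(3) \<open>Y \<subseteq> span ?G\<close> span_superset[of ?G] by blast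
    finally have "span (T ` B) \<subseteq> span ?G" by (simp add: span_minimal)
    moreover have "T ` Y \<subseteq> span (T ` B)" using image_mono[OF B(4), of T] unfolding image_span .
    ultimately show ?thesis by (rule order_trans[rotated])
  qed
  ultimately have "V \<subseteq> span ?G" using V span_minimal[of "Y \<union> T ` Y" "span ?G"] by blast
  then have "dim V \<le> card ?G" using \<open>finite B\<close> by (intro dim_le_card) auto
  also have "\<dots> \<le> card B + card (T ` (B - S))" by (rule card_Un_le)
  also have "\<dots> \<le> card B + card (B - S)" using \<open>finite B\<close> by (simp add: card_image_le)
  also have "card (B - S) = card B - card S"
    using \<open>finite B\<close> B(1) by (simp add: card_Diff_subset finite_subset)
  finally show ?thesis using card_B card_mono[OF \<open>finite B\<close> B(1)] by linarith
qed

lemma funpow_notin_span_orbit: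
  assumes no_inv: "\<And>M. fin_dim_subspace scale M \<Longrightarrow> T ` M \<subseteq> M \<Longrightarrow> M = {0}"
    and "x \<noteq> 0"
  shows "(T ^^ k) x \<notin> span ((\<lambda>i. (T ^^ i) x) ` {..<k})"
proof
  let ?M = "span ((\<lambda>i. (T ^^ i) x) ` {..<k})"
  assume Tk: "(T ^^ k) x \<in> ?M"
  have "T ((T ^^ i) x) \<in> ?M" if "i < k" for i
  proof (cases "Suc i = k")
    case True
    then show ?thesis using Tk by auto
  next
    case False
    with that have "(T ^^ Suc i) x \<in> (\<lambda>i. (T ^^ i) x) ` {..<k}"
      by (intro image_eqI[where x = "Suc i"]) auto
    then show ?thesis using span_base by auto
  qed
  then have "T ` ?M \<subseteq> ?M"
    unfolding image_span by (intro span_minimal) auto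
  moreover have "fin_dim_subspace scale ?M"
    unfolding fin_dim_subspace_def by blast
  ultimately have "?M = {0}" by (rule no_inv[rotated])
  moreover have "x \<in> ?M"
  proof (cases k)
    case 0
    then show ?thesis using Tk by simp
  next
    case (Suc k')
    then show ?thesis by (intro span_base image_eqI[where x = 0]) auto
  qed
  ultimately show False using \<open>x \<noteq> 0\<close> by simp
qed

lemma independent_orbit:
  assumes "\<And>M. fin_dim_subspace scale M \<Longrightarrow> T ` M \<subseteq> M \<Longrightarrow> M = {0}"
    and "x \<noteq> 0"
  shows "independent ((\<lambda>i. (T ^^ i) x) ` {..<k})"
proof (induction k)
  case (Suc k)
  then show ?case
    unfolding lessThan_Suc image_insert
    by (intro independent_insertI funpow_notin_span_orbit[OF assms])
qed (simp add: independent_empty)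

lemma inj_orbit:
  assumes "\<And>M. fin_dim_subspace scale M \<Longrightarrow> T ` M \<subseteq> M \<Longrightarrow> M = {0}"
    and "x \<noteq> 0"
  shows "inj (\<lambda>i. (T ^^ i) x)"
proof (rule linorder_injI)
  fix i j :: nat
  assume "i < j"
  then have "(T ^^ i) x \<in> span ((\<lambda>i. (T ^^ i) x) ` {..<j})" by (intro span_base) auto
  then show "(T ^^ i) x \<noteq> (T ^^ j) x" using funpow_notin_span_orbit[OF assms] by metis
qed

end

locale krylov_setting = linear_endo scale T
  for scale :: "'k::field \<Rightarrow> 'v::ab_group_add \<Rightarrow> 'v" and T +
  fixes L :: "'v set"
  assumes fin_dim_L: "fin_dim_subspace scale L"
begin

primrec krylov :: "nat \<Rightarrow> 'v set" where
  "krylov 0 = L"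
| "krylov (Suc j) = span (L \<union> T ` krylov j)"

lemma subspace_krylov: "subspace (krylov j)"
  using fin_dim_L unfolding fin_dim_subspace_def by (cases j) simp_all

lemma subset_krylov: "L \<subseteq> krylov j"
  by (cases j) (auto intro: span_base)

lemma krylov_Suc_mono: "krylov j \<subseteq> krylov (Suc j)"
proof (induction j)
  case 0
  then show ?case by (auto intro: span_base)
next
  case (Suc j)
  then show ?case by (simp add: image_mono span_mono sup.coboundedI2)
qed

lemma krylov_mono: "i \<le> j \<Longrightarrow> krylov i \<subseteq> krylov j"
  using lift_Suc_mono_le[of krylov, OF krylov_Suc_mono] .

lemma image_krylov: "T ` krylov j \<subseteq> krylov (Suc j)"
  by (auto intro: span_base)

lemma funpow_krylov: "x \<in> krylov j \<Longrightarrow> (T ^^ k) x \<in> krylov (j + k)"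
  by (induction k) (use image_krylov in auto)

lemma krylov_finite_span: "\<exists>F. finite F \<and> krylov j = span F"
proof (induction j)
  case 0
  then show ?case using fin_dim_L unfolding fin_dim_subspace_def by auto
next
  case (Suc j)
  then obtain F where "finite F" "krylov j = span F" by blast
  obtain B where "finite B" "L = span B"
    using fin_dim_L unfolding fin_dim_subspace_def by blast
  have "krylov (Suc j) = span (L \<union> span (T ` F))"
    using \<open>krylov j = span F\<close> by (simp add: image_span)
  also have "\<dots> = span (B \<union> T ` F)"
    unfolding \<open>L = span B\<close> span_eq
  proof
    show "span B \<union> span (T ` F) \<subseteq> span (B \<union> T ` F)"
      using span_mono[of B "B \<union> T ` F"] span_mono[of "T ` F" "B \<union> T ` F"] by blast
    show "B \<union> T ` F \<subseteq> span (span B \<union> span (T ` F))"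
      by (meson Un_mono span_superset subset_trans)
  qed
  finally have "krylov (Suc j) = span (B \<union> T ` F)" .
  with \<open>finite B\<close> \<open>finite F\<close> show ?case by (intro exI[of _ "B \<union> T ` F"]) simp
qed

lemma finite_basis_krylov:
  obtains B where "finite B" "B \<subseteq> krylov j" "independent B" "span B = krylov j"
    "card B = dim (krylov j)"
proof -
  obtain F where "finite F" "krylov j = span F" using krylov_finite_span by blast
  then obtain B where "finite B" "B \<subseteq> krylov j" "independent B" "krylov j \<subseteq> span B"
      "card B = dim (krylov j)"
    by (metis finite_basis_of_finite_span order_refl)
  moreover have "span B = krylov j"
    using calculation(2,4) subspace_krylov by (rule span_subspace)
  ultimately show ?thesis using that by blast
qed

lemma card_le_dim_krylov: "B \<subseteq> krylov j \<Longrightarrow> independent B \<Longrightarrow> card B \<le> dim (krylov j)"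
  using krylov_finite_span card_le_dim_of_finite_span by (metis order_refl)

lemma dim_krylov_Suc_mono: "dim (krylov j) \<le> dim (krylov (Suc j))"
proof -
  obtain B where "B \<subseteq> krylov j" "independent B" "card B = dim (krylov j)"
    using finite_basis_krylov by metis
  then show ?thesis using krylov_Suc_mono card_le_dim_krylov by (metis subset_trans)
qed

lemma dim_krylov_Suc_Suc_le:
  assumes "independent S" "S \<subseteq> krylov (Suc j)" "T ` S \<subseteq> krylov (Suc j)"
  shows "dim (krylov (Suc (Suc j))) + card S \<le> 2 * dim (krylov (Suc j))"
proof -
  obtain F where "finite F" "krylov (Suc j) = span F" using krylov_finite_span by blast
  moreover have "krylov (Suc (Suc j)) \<subseteq> span (krylov (Suc j) \<union> T ` krylov (Suc j))"
    unfolding krylov.simps(2)[of "Suc j"] using subset_krylov[of "Suc j"] by (intro span_mono) blast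
  ultimately show ?thesis using assms by (intro dim_span_Un_image_le) auto
qed

lemma dim_krylov_concave:
  "dim (krylov (Suc (Suc j))) + dim (krylov j) \<le> 2 * dim (krylov (Suc j))"
proof -
  obtain B where B: "B \<subseteq> krylov j" "independent B" "card B = dim (krylov j)"
    using finite_basis_krylov by metis
  have "T ` B \<subseteq> krylov (Suc j)" using B(1) image_krylov by blast
  moreover have "B \<subseteq> krylov (Suc j)" using B(1) krylov_Suc_mono by blast
  ultimately show ?thesis using dim_krylov_Suc_Suc_le[OF B(2)] B(3) by simp
qed

lemma dim_krylov_eventually_affine:
  obtains j0 where
    "\<And>j. j0 \<le> j \<Longrightarrow> dim (krylov (Suc (Suc j))) + dim (krylov j) = 2 * dim (krylov (Suc j))"
proof -
  define \<delta> where "\<delta> j = dim (krylov (Suc j)) - dim (krylov j)" for j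
  have \<delta>_Suc: "\<delta> (Suc j) \<le> \<delta> j" for j
    using dim_krylov_concave[of j] dim_krylov_Suc_mono[of "Suc j"] unfolding \<delta>_def by linarith
  obtain j0 where min: "\<And>j. \<delta> j0 \<le> \<delta> j"
    using ex_has_least_nat[of "\<lambda>_. True" 0 \<delta>] by blast
  show ?thesis
  proof (rule that)
    fix j
    assume "j0 \<le> j"
    then have "\<delta> j \<le> \<delta> j0" by (rule lift_Suc_antimono_le[of \<delta>, OF \<delta>_Suc])
    then have "\<delta> (Suc j) = \<delta> j" using min[of "Suc j"] \<delta>_Suc[of j] by linarith
    then show "dim (krylov (Suc (Suc j))) + dim (krylov j) = 2 * dim (krylov (Suc j))"
      using dim_krylov_Suc_mono[of j] dim_krylov_Suc_mono[of "Suc j"] unfolding \<delta>_def by arith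
  qed
qed

lemma image_notin_krylov:
  assumes affine: "dim (krylov (Suc (Suc j))) + dim (krylov j) = 2 * dim (krylov (Suc j))"
    and v: "v \<in> krylov (Suc j)" "v \<notin> krylov j"
  shows "T v \<notin> krylov (Suc j)"
proof
  assume Tv: "T v \<in> krylov (Suc j)"
  obtain B where B: "finite B" "B \<subseteq> krylov j" "independent B" "span B = krylov j"
      "card B = dim (krylov j)"
    using finite_basis_krylov by metis
  have "v \<notin> B" using B(2) v(2) by blast
  have "independent (insert v B)" using B(3,4) v(2) by (intro independent_insertI) auto
  moreover have "insert v B \<subseteq> krylov (Suc j)" using B(2) v(1) krylov_Suc_mono by blast
  moreover have "T ` insert v B \<subseteq> krylov (Suc j)" using B(2) Tv image_krylov by blast
  ultimately have "dim (krylov (Suc (Suc j))) + card (insert v B) \<le> 2 * dim (krylov (Suc j))"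
    by (rule dim_krylov_Suc_Suc_le)
  with affine B(1,5) \<open>v \<notin> B\<close> show False by simp
qed

lemma funpow_notin_krylov:
  assumes affine: "\<And>j. j0 \<le> j \<Longrightarrow> dim (krylov (Suc (Suc j))) + dim (krylov j) = 2 * dim (krylov (Suc j))"
    and "j0 \<le> j" and v: "v \<in> krylov (Suc j)" "v \<notin> krylov j"
  shows "(T ^^ k) v \<notin> krylov (j + k)"
proof (induction k)
  case (Suc k)
  have "(T ^^ k) v \<in> krylov (Suc (j + k))" using funpow_krylov[OF v(1)] by simp
  then have "T ((T ^^ k) v) \<notin> krylov (Suc (j + k))"
    using Suc \<open>j0 \<le> j\<close> by (intro image_notin_krylov affine) auto
  then show ?case by simp
qed (use v in simp)

lemma orbit_exits_krylov:
  assumes "\<And>M. fin_dim_subspace scale M \<Longrightarrow> T ` M \<subseteq> M \<Longrightarrow> M = {0}"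
    and "x \<noteq> 0"
  shows "\<exists>i \<le> dim (krylov j). (T ^^ i) x \<notin> krylov j"
proof (rule ccontr)
  let ?O = "(\<lambda>i. (T ^^ i) x) ` {..<Suc (dim (krylov j))}"
  assume "\<not> ?thesis"
  then have "?O \<subseteq> krylov j" by auto
  then have "card ?O \<le> dim (krylov j)"
    using independent_orbit[OF assms] by (rule card_le_dim_krylov)
  moreover have "card ?O = Suc (dim (krylov j))"
    using inj_orbit[OF assms] by (simp add: card_image inj_on_subset)
  ultimately show False by simp
qed

lemma subspace_separating_top_power:
  assumes no_inv: "\<And>M. fin_dim_subspace scale M \<Longrightarrow> T ` M \<subseteq> M \<Longrightarrow> M = {0}"
    and affine: "\<And>j. j0 \<le> j \<Longrightarrow> dim (krylov (Suc (Suc j))) + dim (krylov j) = 2 * dim (krylov (Suc j))"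
    and x: "x \<in> L" "x \<noteq> 0" and d: "dim (krylov j0) \<le> d"
  obtains W where "subspace W" "L \<subseteq> W" "\<And>i. i < d \<Longrightarrow> (T ^^ i) x \<in> W" "(T ^^ d) x \<notin> W"
proof -
  obtain k where k: "k \<le> d" "\<And>i. i < k \<Longrightarrow> (T ^^ i) x \<in> krylov j0" "(T ^^ k) x \<notin> krylov j0"
    using orbit_exits_krylov[OF no_inv x(2), of j0] d
      ex_least_nat_le[where P = "\<lambda>i. (T ^^ i) x \<notin> krylov j0"]
    by (metis le_trans)
  define v where "v = (T ^^ k) x"
  have "v \<in> krylov k" using funpow_krylov[of x 0 k] x(1) unfolding v_def by simp
  then obtain e where e: "\<And>i. i < e \<Longrightarrow> v \<notin> krylov i" "v \<in> krylov e"
    using ex_least_nat_le[where P = "\<lambda>i. v \<in> krylov i"] by blast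
  have "\<not> e \<le> j0" using e(2) k(3) krylov_mono unfolding v_def by blast
  then obtain j where j: "e = Suc j" "j0 \<le> j" by (cases e) auto
  txt \<open>The orbit of x leaves K(j0) at step k, at the exact level e = j + 1 > j0; from there on
    it climbs one level per step, so K(j + d - k) separates T^d x from the lower terms.\<close>
  have orbit_v: "(T ^^ i) x = (T ^^ (i - k)) v" if "k \<le> i" for i
    using that funpow_add[of "i - k" k T] unfolding v_def by simp
  show ?thesis
  proof (rule that[of "krylov (j + (d - k))"])
    show "subspace (krylov (j + (d - k)))" by (rule subspace_krylov)
    show "L \<subseteq> krylov (j + (d - k))" by (rule subset_krylov)
    have "(T ^^ (d - k)) v \<notin> krylov (j + (d - k))"
      by (rule funpow_notin_krylov[OF affine j(2)]) (use e j(1) in auto)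
    then show "(T ^^ d) x \<notin> krylov (j + (d - k))" using orbit_v[OF k(1)] by simp
  next
    fix i
    assume "i < d"
    show "(T ^^ i) x \<in> krylov (j + (d - k))"
    proof (cases "i < k")
      case True
      then show ?thesis using k(2) krylov_mono j(2) by (meson le_add1 le_trans subsetD)
    next
      case False
      have "(T ^^ (i - k)) v \<in> krylov (Suc j + (i - k))"
        using e(2) j(1) by (intro funpow_krylov) simp
      then have "(T ^^ i) x \<in> krylov (Suc j + (i - k))" using orbit_v False by simp
      moreover have "Suc j + (i - k) \<le> j + (d - k)" using False \<open>i < d\<close> by simp
      ultimately show ?thesis using krylov_mono by blast
    qed
  qed
qed

end

theorem lemma1p5:
  fixes scale :: "'k::field \<Rightarrow> 'v::ab_group_add \<Rightarrow> 'v"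
    and T :: "'v \<Rightarrow> 'v"
    and L :: "'v set"
  assumes vs: "vector_space scale"
    and nontriv: "(UNIV :: 'v set) \<noteq> {0}"
    and lin: "Vector_Spaces.linear scale scale T"
    and no_inv: "\<And>M. fin_dim_subspace scale M \<Longrightarrow> T ` M \<subseteq> M \<Longrightarrow> M = {0}"
    and L: "fin_dim_subspace scale L"
  shows "\<exists>m::nat. \<forall>p :: 'k poly. degree p \<ge> m \<longrightarrow> poly_op scale p T ` L \<inter> L = {0}"
proof -
  interpret krylov_setting scale T L
    using vs lin L by (simp add: krylov_setting_def krylov_setting_axioms_def
        linear_endo_def linear_endo_axioms_def)
  obtain j0 where affine:
    "\<And>j. j0 \<le> j \<Longrightarrow> dim (krylov (Suc (Suc j))) + dim (krylov j) = 2 * dim (krylov (Suc j))"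
    using dim_krylov_eventually_affine by blast
  have "poly_op scale p T ` L \<inter> L = {0}" if deg: "dim (krylov j0) \<le> degree p" for p
  proof -
    have "poly_op scale p T x = 0" if x: "x \<in> L" "poly_op scale p T x \<in> L" for x
    proof (rule ccontr)
      assume "poly_op scale p T x \<noteq> 0"
      then have "x \<noteq> 0" "p \<noteq> 0" by (auto simp: poly_op_def funpow_at_zero)
      then obtain W where W: "subspace W" "L \<subseteq> W" "\<And>i. i < degree p \<Longrightarrow> (T ^^ i) x \<in> W"
          "(T ^^ degree p) x \<notin> W"
        using subspace_separating_top_power[OF no_inv affine x(1) _ deg] by blast
      have "poly_op scale p T x \<in> W" using x(2) W(2) by blast
      with W(1) \<open>p \<noteq> 0\<close> W(3) have "(T ^^ degree p) x \<in> W"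
        by (rule funpow_degree_in_subspace)
      with W(4) show False ..
    qed
    moreover have "0 \<in> L" using L subspace_0 unfolding fin_dim_subspace_def by blast
    moreover have "poly_op scale p T 0 = 0" by (simp add: poly_op_def funpow_at_zero)
    ultimately show ?thesis by force
  qed
  then show ?thesis by blast
qed

end
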